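(* Let $n\ge 1$, let $f$ be the standard Gaussian density on $\mathbb{R}^n$, and let $\phi:\mathbb{R}^n\to\mathbb{R}_+$ be a non-negative measurable function with $E=\int \phi(\mathbf{x})f(\mathbf{x})\,\mathrm{d}\mathbf{x}\in(0,\infty)$. Let $g^*=\phi f/E$, and let $\mathbf{m}^*=\mathbb{E}_{g^*}(\mathbf{X})$ and $\Sigma^*=\mathrm{Var}_{g^*}(\mathbf{X})$ be the mean and covariance matrix of $g^*$ (assumed to exist, with $\Sigma^*$ symmetric positive definite). Let $(\lambda^*_i,\mathbf{d}^*_i)$, $i=1,\dots,n$, be eigenpairs of $\Sigma^*$ (i.e. $\Sigma^*\mathbf{d}^*_i=\lambda^*_i\mathbf{d}^*_i$, with $\mathbf{d}^*_1,\dots,\mathbf{d}^*_n$ an orthonormal basis of $\mathbb{R}^n$) ranked in increasing $\ell$-order, i.e. $\ell(\lambda^*_1)\le \cdots\le \ell(\lambda^*_n)$, where $\ell(x)=\log(x)-x+1$ for $x>0$. Then for every $1\le k\le n$, the solution $\Sigma^*_k$ of the minimization problem $$\Sigma^*_k=\arg\min\{D(g^*,g_{\mathbf{m}^*,\Sigma}) : \Sigma\in\mathcal{L}_{n,k}\}$$ is given by $$\Sigma^*_k=I_n+\sum_{i=1}^k(\lambda^*_i-1)\,\mathbf{d}^*_i(\mathbf{d}^*_i)^\top .$$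
   Context: For $\mathbf{m}\in\mathbb{R}^n$ and $\Sigma$ a symmetric positive definite $n\times n$ matrix, $g_{\mathbf{m},\Sigma}$ denotes the Gaussian density on $\mathbb{R}^n$ with mean $\mathbf{m}$ and covariance $\Sigma$. For densities $p,h$ with $p$ absolutely continuous with respect to $h$, the Kullback--Leibler divergence is $D(p,h)=\int \log\big(p(\mathbf{x})/h(\mathbf{x})\big)p(\mathbf{x})\,\mathrm{d}\mathbf{x}$. The set $\mathcal{L}_{n,k}$ is $$\mathcal{L}_{n,k}=\Big\{\sum_{i=1}^k(\alpha_i-1)\frac{\mathbf{d}_i\mathbf{d}_i^\top}{\|\mathbf{d}_i\|^2}+I_n : \alpha_1,\dots,\alpha_k>0,\ \mathbf{d}_1,\dots,\mathbf{d}_k\in\mathbb{R}^n\setminus\{0\}\text{ pairwise orthogonal}\Big\},$$ where $I_n$ is the $n\times n$ identity matrix. *)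

theory Defs
  imports "HOL-Analysis.Analysis"
begin

definition outer :: "real^'n \<Rightarrow> real^'n \<Rightarrow> real^'n^'n" where
  "outer u v = (\<chi> i j. u $ i * v $ j)"

definition sym_pos_def :: "real^'n^'n \<Rightarrow> bool" where
  "sym_pos_def S \<longleftrightarrow> transpose S = S \<and> (\<forall>x. x \<noteq> 0 \<longrightarrow> x \<bullet> (S *v x) > 0)"

definition gauss_dens :: "real^'n \<Rightarrow> real^'n^'n \<Rightarrow> real^'n \<Rightarrow> real" where
  "gauss_dens m S x =
     exp (- (1/2) * ((x - m) \<bullet> (matrix_inv S *v (x - m))))
     / sqrt ((2 * pi) ^ CARD('n) * det S)"

text \<open>Kullback--Leibler divergence D(p,h) = int log(p/h) p, with values in [0,\<infinity>]
  (the negative part of the integrand is always integrable for densities, so the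
  integral is +\<infinity> exactly when the integrand is not integrable).\<close>
definition KL :: "(real^'n \<Rightarrow> real) \<Rightarrow> (real^'n \<Rightarrow> real) \<Rightarrow> ereal" where
  "KL p h = (if integrable lborel (\<lambda>x. p x * ln (p x / h x))
             then ereal (\<integral>x. p x * ln (p x / h x) \<partial>lborel) else \<infinity>)"

definition Lnk :: "nat \<Rightarrow> (real^'n^'n) set" where
  "Lnk k = {mat 1 + (\<Sum>i\<in>{1..k}. ((\<alpha> i - 1) / (norm (d i))\<^sup>2) *\<^sub>R outer (d i) (d i)) | \<alpha> d.
             (\<forall>i\<in>{1..k}. \<alpha> i > 0 \<and> d i \<noteq> 0) \<and>
             (\<forall>i\<in>{1..k}. \<forall>j\<in>{1..k}. i \<noteq> j \<longrightarrow> d i \<bullet> d j = 0)}"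

definition ell :: "real \<Rightarrow> real" where
  "ell x = ln x - x + 1"

end

theory Submission
  imports Defs
begin

(* Write T in L_{n,k} as I + sum_i (alpha_i - 1) u_i u_i^T with u_1, ..., u_k orthonormal.
   Then det T = prod_i alpha_i and T^-1 = I + sum_i (1/alpha_i - 1) u_i u_i^T, so up to terms
   not depending on T, 2 D(g*, g_{m*,T}) is  sum_i [ln alpha_i + (1/alpha_i - 1) q_i]  with
   q_i = u_i^T Sigma* u_i.  The summand is the tangent line of the concave function ell at
   alpha_i evaluated at q_i, hence at least ell(q_i), with equality for alpha_i = q_i.
   In the eigenbasis, q_i is the convex combination of the lambda_j with weights
   c_ij = (u_i . d_j)^2, so by concavity sum_i ell(q_i) >= sum_j w_j ell(lambda_j) with
   w_j = sum_i c_ij.  Bessel's inequality gives 0 <= w_j <= 1, and sum_j w_j = k; such a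
   weighted sum is at least the sum of the k smallest values ell(lambda_1), ..., ell(lambda_k).
   All bounds are attained by alpha_i = lambda_i, u_i = d_i. *)

definition orthonormal_on :: "'i set \<Rightarrow> ('i \<Rightarrow> 'a::real_inner) \<Rightarrow> bool" where
  "orthonormal_on I u \<longleftrightarrow> (\<forall>i\<in>I. \<forall>j\<in>I. u i \<bullet> u j = (if i = j then 1 else 0))"

lemma orthonormal_on_subset: "orthonormal_on J u \<Longrightarrow> I \<subseteq> J \<Longrightarrow> orthonormal_on I u"
  unfolding orthonormal_on_def by blast

lemma orthonormal_on_inner_self: "orthonormal_on I u \<Longrightarrow> i \<in> I \<Longrightarrow> u i \<bullet> u i = 1"
  unfolding orthonormal_on_def by simp

lemma orthonormal_on_nonzero: "orthonormal_on I u \<Longrightarrow> i \<in> I \<Longrightarrow> u i \<noteq> 0"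
  using orthonormal_on_inner_self by fastforce

lemma sum_inner_orthonormal_on:
  assumes "finite I" "orthonormal_on I u" "j \<in> I"
  shows "(\<Sum>i\<in>I. c i * (u i \<bullet> u j)) = c j"
proof -
  have "(\<Sum>i\<in>I. c i * (u i \<bullet> u j)) = (\<Sum>i\<in>I. if i = j then c j else 0)"
    using assms(2,3) by (intro sum.cong) (auto simp: orthonormal_on_def)
  then show ?thesis using assms(1,3) by simp
qed

lemma bessel_inequality:
  assumes "finite I" "orthonormal_on I u"
  shows "(\<Sum>i\<in>I. (u i \<bullet> x)\<^sup>2) \<le> x \<bullet> x"
proof -
  define y where "y = (\<Sum>i\<in>I. (u i \<bullet> x) *\<^sub>R u i)"
  have xy: "x \<bullet> y = (\<Sum>i\<in>I. (u i \<bullet> x)\<^sup>2)"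
    by (simp add: y_def inner_sum_right power2_eq_square inner_commute)
  have "y \<bullet> y = (\<Sum>j\<in>I. (u j \<bullet> x) * (\<Sum>i\<in>I. (u i \<bullet> x) * (u i \<bullet> u j)))"
    by (simp add: y_def inner_sum_left inner_sum_right sum_distrib_left mult_ac)
  also have "\<dots> = (\<Sum>j\<in>I. (u j \<bullet> x)\<^sup>2)"
    using sum_inner_orthonormal_on[OF assms] by (simp add: power2_eq_square)
  finally have yy: "y \<bullet> y = (\<Sum>i\<in>I. (u i \<bullet> x)\<^sup>2)" .
  have "0 \<le> (x - y) \<bullet> (x - y)" by simp
  also have "\<dots> = x \<bullet> x - 2 * (x \<bullet> y) + y \<bullet> y"
    by (simp add: inner_diff_left inner_diff_right inner_commute)
  finally show ?thesis using xy yy by simp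
qed

lemma orthonormal_basis_expansion:
  fixes u :: "'i \<Rightarrow> 'a::euclidean_space"
  assumes "finite I" "orthonormal_on I u" "card I = DIM('a)"
  shows "x = (\<Sum>i\<in>I. (x \<bullet> u i) *\<^sub>R u i)"
proof -
  have inj: "inj_on u I"
    using assms(2) unfolding inj_on_def orthonormal_on_def by (metis zero_neq_one)
  have "independent (u ` I)"
    using assms(2) orthonormal_on_nonzero[OF assms(2)]
    by (intro pairwise_orthogonal_independent) (auto simp: pairwise_def orthogonal_def orthonormal_on_def)
  moreover have "card (u ` I) = DIM('a)"
    using inj assms(3) by (simp add: card_image)
  ultimately have span: "span (u ` I) = UNIV"
    by (metis dim_eq_card dim_eq_full)
  define y where "y = x - (\<Sum>i\<in>I. (x \<bullet> u i) *\<^sub>R u i)"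
  have "y \<bullet> u j = 0" if "j \<in> I" for j
    using sum_inner_orthonormal_on[OF assms(1,2) that]
    by (simp add: y_def inner_diff_left inner_sum_left)
  then have "orthogonal y z" if "z \<in> u ` I" for z
    using that unfolding orthogonal_def by auto
  then have "orthogonal y y"
    using orthogonal_to_span[of y "u ` I" y] span by auto
  then show ?thesis by (simp add: y_def orthogonal_self)
qed

section \<open>Identity plus orthogonal rank-one terms\<close>

lemma outer_mult_vec: "outer u v *v x = (v \<bullet> x) *\<^sub>R (u :: real^'n)"
  by (simp add: outer_def matrix_vector_mult_def vec_eq_iff inner_vec_def sum_distrib_left mult_ac)

lemma sum_matrix_vector_mult: "(\<Sum>i\<in>I. A i) *v x = (\<Sum>i\<in>I. A i *v (x :: real^'n))"
  by (induction I rule: infinite_finite_induct) (auto simp: matrix_vector_mult_add_rdistrib)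

lemma matrix_inv_eqI:
  fixes A B :: "'a::semiring_1^'n^'n"
  assumes "A ** B = mat 1" "B ** A = mat 1"
  shows "matrix_inv A = B"
proof -
  have inv: "A ** matrix_inv A = mat 1 \<and> matrix_inv A ** A = mat 1"
    unfolding matrix_inv_def by (rule someI[of _ B]) (use assms in blast)
  have "matrix_inv A = matrix_inv A ** (A ** B)"
    using assms(1) by (simp add: matrix_mul_rid)
  also have "\<dots> = B"
    using inv by (simp add: matrix_mul_assoc matrix_mul_lid)
  finally show ?thesis .
qed

lemma det_id_plus_outer:
  fixes u :: "real^'n"
  assumes "norm u = 1"
  shows "det (mat 1 + c *\<^sub>R outer u u) = 1 + c"
proof -
  fix k :: 'n
  obtain Q where Q: "orthogonal_matrix Q" "Q *v axis k 1 = u"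
    using orthogonal_matrix_exists_basis[OF assms] by blast
  let ?D = "mat 1 + c *\<^sub>R outer (axis k 1) (axis k 1) :: real^'n^'n"
  have "det ?D = (\<Prod>i\<in>UNIV. ?D $ i $ i)"
    by (rule det_diagonal) (auto simp: mat_def outer_def axis_def)
  also have "\<dots> = (\<Prod>i\<in>UNIV. if i = k then 1 + c else 1)"
    by (intro prod.cong) (auto simp: mat_def outer_def axis_def)
  finally have det_D: "det ?D = 1 + c" by simp
  have "(Q ** ?D ** transpose Q) *v x = (mat 1 + c *\<^sub>R outer u u) *v x" for x
  proof -
    have QQt: "Q *v (transpose Q *v y) = y" for y
      using Q(1) by (simp add: matrix_vector_mul_assoc orthogonal_matrix_def del: transpose_matrix_vector)
    have "axis k 1 \<bullet> (transpose Q *v x) = u \<bullet> x"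
      using Q(2) by (metis dot_lmul_matrix inner_commute transpose_matrix_vector)
    then have "(Q ** ?D ** transpose Q) *v x = x + (c * (u \<bullet> x)) *\<^sub>R u"
      using Q(2) QQt by (simp add: matrix_vector_mul_assoc[symmetric] matrix_vector_mult_add_rdistrib
          scaleR_matrix_vector_assoc[symmetric] outer_mult_vec matrix_vector_right_distrib
          matrix_vector_mult_scaleR del: transpose_matrix_vector)
    then show ?thesis
      by (simp add: matrix_vector_mult_add_rdistrib scaleR_matrix_vector_assoc[symmetric] outer_mult_vec)
  qed
  then have "mat 1 + c *\<^sub>R outer u u = Q ** ?D ** transpose Q"
    by (simp add: matrix_eq)
  then have "det (mat 1 + c *\<^sub>R outer u u) = det ?D * (det Q)\<^sup>2"
    by (simp add: det_mul det_transpose power2_eq_square)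
  then show ?thesis
    using det_orthogonal_matrix[OF Q(1)] det_D by auto
qed

definition rank_one_update :: "'i set \<Rightarrow> ('i \<Rightarrow> real) \<Rightarrow> ('i \<Rightarrow> real^'n) \<Rightarrow> real^'n^'n" where
  "rank_one_update I a u = mat 1 + (\<Sum>i\<in>I. a i *\<^sub>R outer (u i) (u i))"

lemma rank_one_update_mult_vec:
  "rank_one_update I a u *v x = x + (\<Sum>i\<in>I. (a i * (u i \<bullet> x)) *\<^sub>R u i)"
  by (simp add: rank_one_update_def matrix_vector_mult_add_rdistrib sum_matrix_vector_mult
      scaleR_matrix_vector_assoc[symmetric] outer_mult_vec)

lemma inner_rank_one_update:
  assumes "finite I" "orthonormal_on I u" "j \<in> I"
  shows "u j \<bullet> (rank_one_update I a u *v x) = (1 + a j) * (u j \<bullet> x)"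
  using sum_inner_orthonormal_on[OF assms, of "\<lambda>i. a i * (u i \<bullet> x)"]
  by (simp add: rank_one_update_mult_vec inner_add_right inner_sum_right inner_commute[of "u j"]
      algebra_simps)

lemma rank_one_update_cong:
  "(\<And>i. i \<in> I \<Longrightarrow> a i = b i) \<Longrightarrow> rank_one_update I a u = rank_one_update I b u"
  by (simp add: rank_one_update_def)

lemma rank_one_update_eq_id: "(\<And>i. i \<in> I \<Longrightarrow> a i = 0) \<Longrightarrow> rank_one_update I a u = mat 1"
  by (simp add: rank_one_update_def)

lemma rank_one_update_mult:
  assumes "finite I" "orthonormal_on I u"
  shows "rank_one_update I a u ** rank_one_update I b u
           = rank_one_update I (\<lambda>i. a i + b i + a i * b i) u"
proof -
  have "rank_one_update I a u *v (rank_one_update I b u *v x)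
          = rank_one_update I (\<lambda>i. a i + b i + a i * b i) u *v x" for x
  proof -
    have "rank_one_update I a u *v (rank_one_update I b u *v x)
            = rank_one_update I b u *v x + (\<Sum>i\<in>I. (a i * ((1 + b i) * (u i \<bullet> x))) *\<^sub>R u i)"
      using assms by (simp add: rank_one_update_mult_vec[of I a] inner_rank_one_update cong: sum.cong)
    also have "\<dots> = x + (\<Sum>i\<in>I. (b i * (u i \<bullet> x)) *\<^sub>R u i + (a i * ((1 + b i) * (u i \<bullet> x))) *\<^sub>R u i)"
      by (simp add: rank_one_update_mult_vec sum.distrib)
    also have "\<dots> = rank_one_update I (\<lambda>i. a i + b i + a i * b i) u *v x"
      by (simp add: rank_one_update_mult_vec algebra_simps flip: scaleR_add_left)
    finally show ?thesis .
  qed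
  then show ?thesis by (simp add: matrix_eq matrix_vector_mul_assoc)
qed

lemma matrix_inv_rank_one_update:
  assumes "finite I" "orthonormal_on I u" "\<And>i. i \<in> I \<Longrightarrow> 0 < \<alpha> i"
  shows "matrix_inv (rank_one_update I (\<lambda>i. \<alpha> i - 1) u) = rank_one_update I (\<lambda>i. 1 / \<alpha> i - 1) u"
proof (rule matrix_inv_eqI)
  have "(\<alpha> i - 1) + (1 / \<alpha> i - 1) + (\<alpha> i - 1) * (1 / \<alpha> i - 1) = 0" if "i \<in> I" for i
    using assms(3)[OF that] by (simp add: field_simps)
  then show "rank_one_update I (\<lambda>i. \<alpha> i - 1) u ** rank_one_update I (\<lambda>i. 1 / \<alpha> i - 1) u = mat 1"
    "rank_one_update I (\<lambda>i. 1 / \<alpha> i - 1) u ** rank_one_update I (\<lambda>i. \<alpha> i - 1) u = mat 1"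
    unfolding rank_one_update_mult[OF assms(1,2)]
    by (auto intro!: rank_one_update_eq_id simp: algebra_simps)
qed

lemma det_rank_one_update:
  assumes "finite I" "orthonormal_on I u"
  shows "det (rank_one_update I a u) = (\<Prod>i\<in>I. 1 + a i)"
  using assms
proof (induction I rule: finite_induct)
  case empty
  then show ?case by (simp add: rank_one_update_def)
next
  case (insert j I)
  let ?J = "insert j I"
  define a' where "a' = a(j := 0)"
  define b where "b i = (if i = j then a j else 0)" for i
  have "rank_one_update ?J a u = rank_one_update ?J (\<lambda>i. a' i + b i + a' i * b i) u"
    by (rule rank_one_update_cong) (simp add: a'_def b_def)
  also have "\<dots> = rank_one_update ?J a' u ** rank_one_update ?J b u"
    using insert(1,4) by (simp add: rank_one_update_mult)
  also have "rank_one_update ?J a' u = rank_one_update I a u"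
    using insert(1,2) unfolding rank_one_update_def a'_def
    by (simp add: sum.insert) (intro sum.cong, auto)
  also have "rank_one_update ?J b u = mat 1 + a j *\<^sub>R outer (u j) (u j)"
    using insert(1,2) unfolding rank_one_update_def b_def
    by (simp add: sum.insert) (intro sum.neutral, auto)
  finally have "det (rank_one_update ?J a u) = det (rank_one_update I a u) * (1 + a j)"
    using orthonormal_on_inner_self[OF insert(4)]
    by (simp add: det_mul det_id_plus_outer norm_eq_1)
  then show ?case
    using insert orthonormal_on_subset[OF insert(4), of I] by auto
qed

lemma Lnk_eq:
  "Lnk k = {rank_one_update {1..k} (\<lambda>i. \<alpha> i - 1) u | \<alpha> u.
              (\<forall>i\<in>{1..k}. 0 < \<alpha> i) \<and> orthonormal_on {1..k} u}"
proof (intro set_eqI iffI)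
  fix S :: "real^'n^'n"
  assume "S \<in> Lnk k"
  then obtain \<alpha> d where S: "S = mat 1 + (\<Sum>i\<in>{1..k}. ((\<alpha> i - 1) / (norm (d i))\<^sup>2) *\<^sub>R outer (d i) (d i))"
    and \<alpha>d: "\<forall>i\<in>{1..k}. 0 < \<alpha> i \<and> d i \<noteq> 0"
    and orth: "\<forall>i\<in>{1..k}. \<forall>j\<in>{1..k}. i \<noteq> j \<longrightarrow> d i \<bullet> d j = 0"
    unfolding Lnk_def by blast
  define u where "u i = d i /\<^sub>R norm (d i)" for i
  have "outer (u i) (u i) = (1 / (norm (d i))\<^sup>2) *\<^sub>R outer (d i) (d i)" for i
    by (simp add: u_def outer_def vec_eq_iff power2_eq_square field_simps)
  then have "S = rank_one_update {1..k} (\<lambda>i. \<alpha> i - 1) u"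
    by (simp add: S rank_one_update_def divide_inverse)
  moreover have "orthonormal_on {1..k} u"
    using \<alpha>d orth by (auto simp: orthonormal_on_def u_def dot_square_norm power2_eq_square field_simps)
  ultimately show "S \<in> {rank_one_update {1..k} (\<lambda>i. \<alpha> i - 1) u | \<alpha> u.
              (\<forall>i\<in>{1..k}. 0 < \<alpha> i) \<and> orthonormal_on {1..k} u}"
    using \<alpha>d by blast
next
  fix S :: "real^'n^'n"
  assume "S \<in> {rank_one_update {1..k} (\<lambda>i. \<alpha> i - 1) u | \<alpha> u.
              (\<forall>i\<in>{1..k}. 0 < \<alpha> i) \<and> orthonormal_on {1..k} u}"
  then obtain \<alpha> u where S: "S = rank_one_update {1..k} (\<lambda>i. \<alpha> i - 1) u"
    and \<alpha>: "\<forall>i\<in>{1..k}. 0 < \<alpha> i" and u: "orthonormal_on {1..k} u"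
    by blast
  have "norm (u i) = 1" if "i \<in> {1..k}" for i
    using orthonormal_on_inner_self[OF u that] by (simp add: norm_eq_1)
  then have "S = mat 1 + (\<Sum>i\<in>{1..k}. ((\<alpha> i - 1) / (norm (u i))\<^sup>2) *\<^sub>R outer (u i) (u i))"
    by (simp add: S rank_one_update_def)
  moreover have "\<forall>i\<in>{1..k}. 0 < \<alpha> i \<and> u i \<noteq> 0"
    using \<alpha> orthonormal_on_nonzero[OF u] by blast
  moreover have "\<forall>i\<in>{1..k}. \<forall>j\<in>{1..k}. i \<noteq> j \<longrightarrow> u i \<bullet> u j = 0"
    using u by (simp add: orthonormal_on_def)
  ultimately show "S \<in> Lnk k"
    unfolding Lnk_def by blast
qed

section \<open>A Ky Fan type inequality for ell\<close>

lemma ell_le: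
  assumes "0 < a" "0 < q"
  shows "ell q \<le> ln a + (1 / a - 1) * q"
proof -
  have "ln (q / a) \<le> q / a - 1"
    using assms by (intro ln_le_minus_one) simp
  then show ?thesis
    using assms by (simp add: ell_def ln_div field_simps)
qed

lemma ell_eq: "0 < a \<Longrightarrow> ell a = ln a + (1 / a - 1) * a"
  by (simp add: ell_def field_simps)

lemma ell_weighted_mean_ge:
  assumes "finite J" "\<And>j. j \<in> J \<Longrightarrow> 0 \<le> c j" "(\<Sum>j\<in>J. c j) = 1" "\<And>j. j \<in> J \<Longrightarrow> 0 < x j"
  shows "(\<Sum>j\<in>J. c j * ell (x j)) \<le> ell (\<Sum>j\<in>J. c j * x j)"
proof -
  define q where "q = (\<Sum>j\<in>J. c j * x j)"
  have "\<exists>i\<in>J. 0 < c i"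
  proof (rule ccontr)
    assume "\<not> (\<exists>i\<in>J. 0 < c i)"
    then have "(\<Sum>j\<in>J. c j) = 0"
      using assms(2) by (intro sum.neutral) (meson order_antisym not_less)
    then show False using assms(3) by simp
  qed
  then obtain i where "i \<in> J" "0 < c i" by blast
  then have "0 < q"
    unfolding q_def using assms
    by (intro sum_pos2[of J i]) (simp_all add: less_imp_le)
  have "(\<Sum>j\<in>J. c j * ell (x j)) \<le> (\<Sum>j\<in>J. c j * (ln q + (1 / q - 1) * x j))"
    using assms \<open>0 < q\<close> by (intro sum_mono mult_left_mono ell_le) auto
  also have "\<dots> = ln q * (\<Sum>j\<in>J. c j) + (1 / q - 1) * (\<Sum>j\<in>J. c j * x j)"
    by (simp add: distrib_left sum.distrib sum_distrib_left mult_ac)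
  also have "\<dots> = ell q"
    using assms(3) ell_eq[OF \<open>0 < q\<close>] by (simp flip: q_def)
  finally show ?thesis by (simp add: q_def)
qed

lemma sum_smallest_le_weighted_sum:
  fixes a w :: "nat \<Rightarrow> real"
  assumes mono: "\<And>i j. i \<in> {1..N} \<Longrightarrow> j \<in> {1..N} \<Longrightarrow> i \<le> j \<Longrightarrow> a i \<le> a j"
    and w: "\<And>j. j \<in> {1..N} \<Longrightarrow> 0 \<le> w j \<and> w j \<le> 1"
    and w_sum: "(\<Sum>j=1..N. w j) = real k" and k: "1 \<le> k" "k \<le> N"
  shows "(\<Sum>j=1..k. a j) \<le> (\<Sum>j=1..N. w j * a j)"
proof -
  have split: "(\<Sum>j=1..N. f j) = (\<Sum>j=1..k. f j) + (\<Sum>j=k+1..N. f j)" for f :: "nat \<Rightarrow> real"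
  proof -
    have "{1..N} = {1..k} \<union> {k+1..N}"
      using k by auto
    then show ?thesis
      by (simp add: sum.union_disjoint)
  qed
  have low: "(\<Sum>j=1..k. (w j - 1) * a k) \<le> (\<Sum>j=1..k. (w j - 1) * a j)"
    using k w mono by (intro sum_mono mult_left_mono_neg) auto
  have high: "(\<Sum>j=k+1..N. w j * a k) \<le> (\<Sum>j=k+1..N. w j * a j)"
    using k w mono by (intro sum_mono mult_left_mono) auto
  have "(\<Sum>j=1..k. (w j - 1) * a k) + (\<Sum>j=k+1..N. w j * a k)
          = ((\<Sum>j=1..k. w j) - real k + (\<Sum>j=k+1..N. w j)) * a k"
    by (simp add: sum_distrib_right[symmetric] sum_subtractf algebra_simps sum_distrib_left)
  also have "\<dots> = 0"
    using w_sum split[of w] by simp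
  finally have "0 \<le> (\<Sum>j=1..k. (w j - 1) * a j) + (\<Sum>j=k+1..N. w j * a j)"
    using low high by linarith
  also have "\<dots> = (\<Sum>j=1..N. w j * a j) - (\<Sum>j=1..k. a j)"
    unfolding split[of "\<lambda>j. w j * a j"] by (simp add: algebra_simps sum_subtractf)
  finally show ?thesis by simp
qed

lemma eigenvalue_pos:
  assumes "\<And>x. x \<noteq> 0 \<Longrightarrow> 0 < x \<bullet> (S *v x)" "S *v v = l *\<^sub>R v" "v \<noteq> 0"
  shows "0 < l"
  using assms(1)[OF assms(3)] assms(2) inner_ge_zero[of v] by (auto simp: zero_less_mult_iff)

lemma quadratic_form_eigenbasis:
  fixes S :: "real^'n^'n" and d :: "'i \<Rightarrow> real^'n"
  assumes "finite J" "orthonormal_on J d" "card J = CARD('n)"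
    and eig: "\<And>j. j \<in> J \<Longrightarrow> S *v d j = lam j *\<^sub>R d j"
  shows "x \<bullet> (S *v x) = (\<Sum>j\<in>J. (x \<bullet> d j)\<^sup>2 * lam j)"
proof -
  have "S *v x = S *v (\<Sum>j\<in>J. (x \<bullet> d j) *\<^sub>R d j)"
    using orthonormal_basis_expansion[OF assms(1,2)] assms(3) by simp
  also have "\<dots> = (\<Sum>j\<in>J. ((x \<bullet> d j) * lam j) *\<^sub>R d j)"
    using eig by (simp add: linear_sum[OF matrix_vector_mul_linear] matrix_vector_mult_scaleR)
  finally show ?thesis
    by (simp add: inner_sum_right power2_eq_square mult_ac)
qed

lemma sum_ell_eigenvalues_le:
  fixes S :: "real^'n^'n" and d u :: "nat \<Rightarrow> real^'n"
  assumes pd: "\<And>x. x \<noteq> 0 \<Longrightarrow> 0 < x \<bullet> (S *v x)"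
    and eig: "\<And>j. j \<in> {1..N} \<Longrightarrow> S *v d j = lam j *\<^sub>R d j"
    and d: "orthonormal_on {1..N} d" and N: "N = CARD('n)"
    and ranked: "\<And>i j. i \<in> {1..N} \<Longrightarrow> j \<in> {1..N} \<Longrightarrow> i \<le> j \<Longrightarrow> ell (lam i) \<le> ell (lam j)"
    and u: "orthonormal_on {1..k} u" and k: "1 \<le> k" "k \<le> N"
  shows "(\<Sum>i=1..k. ell (lam i)) \<le> (\<Sum>i=1..k. ell (u i \<bullet> (S *v u i)))"
proof -
  define c where "c i j = (u i \<bullet> d j)\<^sup>2" for i j
  define w where "w j = (\<Sum>i=1..k. c i j)" for j
  have card: "card {1..N} = CARD('n)"
    using N by simp
  have lam_pos: "0 < lam j" if "j \<in> {1..N}" for j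
    using eigenvalue_pos[OF pd eig[OF that] orthonormal_on_nonzero[OF d that]] .
  have row: "(\<Sum>j=1..N. c i j) = 1" if "i \<in> {1..k}" for i
    \<comment> \<open>Parseval, read off from the quadratic form of the identity matrix\<close>
    using quadratic_form_eigenbasis[OF _ d card, of "mat 1" "\<lambda>_. 1" "u i"]
      orthonormal_on_inner_self[OF u that]
    by (simp add: c_def)
  have rayleigh: "u i \<bullet> (S *v u i) = (\<Sum>j=1..N. c i j * lam j)" for i
    using quadratic_form_eigenbasis[OF _ d card eig] by (simp add: c_def)
  have w: "0 \<le> w j \<and> w j \<le> 1" if "j \<in> {1..N}" for j
  proof
    show "0 \<le> w j"
      by (simp add: w_def c_def sum_nonneg)
    have "w j \<le> d j \<bullet> d j"
      using bessel_inequality[OF _ u, of "d j"] by (simp add: w_def c_def inner_commute)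
    then show "w j \<le> 1"
      using orthonormal_on_inner_self[OF d that] by simp
  qed
  have "(\<Sum>j=1..N. w j) = (\<Sum>i=1..k. \<Sum>j=1..N. c i j)"
    unfolding w_def by (rule sum.swap)
  also have "\<dots> = real k"
    using row by simp
  finally have w_sum: "(\<Sum>j=1..N. w j) = real k" .
  have "(\<Sum>i=1..k. ell (lam i)) \<le> (\<Sum>j=1..N. w j * ell (lam j))"
    by (rule sum_smallest_le_weighted_sum[where a = "\<lambda>i. ell (lam i)", OF ranked w w_sum k])
  also have "\<dots> = (\<Sum>i=1..k. \<Sum>j=1..N. c i j * ell (lam j))"
    unfolding w_def sum_distrib_right by (rule sum.swap)
  also have "\<dots> \<le> (\<Sum>i=1..k. ell (u i \<bullet> (S *v u i)))"
    unfolding rayleigh using row lam_pos by (intro sum_mono ell_weighted_mean_ge) (auto simp: c_def)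
  finally show ?thesis .
qed

section \<open>Kullback-Leibler divergence to a Gaussian\<close>

definition frob_inner :: "real^'n^'n \<Rightarrow> real^'n^'n \<Rightarrow> real" where
  "frob_inner A B = (\<Sum>i\<in>UNIV. \<Sum>j\<in>UNIV. A $ i $ j * B $ i $ j)"

lemma linear_frob_inner: "linear (frob_inner A)"
  by (rule linearI) (simp_all add: frob_inner_def algebra_simps sum.distrib sum_distrib_left)

lemma frob_inner_outer: "frob_inner A (outer u u) = u \<bullet> (A *v u)"
  by (simp add: frob_inner_def outer_def inner_vec_def matrix_vector_mult_def sum_distrib_left mult_ac)

lemma frob_inner_rank_one_update:
  "frob_inner A (rank_one_update I a u) = frob_inner A (mat 1) + (\<Sum>i\<in>I. a i * (u i \<bullet> (A *v u i)))"
  by (simp add: rank_one_update_def linear_add[OF linear_frob_inner] linear_sum[OF linear_frob_inner]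
      linear_scale[OF linear_frob_inner] frob_inner_outer o_def)

(* Twice the T-dependent part of D(g, g_{m,T}) when S is the second moment of g about m
   (see KL_gauss_dens). *)
definition gauss_KL_cost :: "real^'n^'n \<Rightarrow> real^'n^'n \<Rightarrow> real" where
  "gauss_KL_cost S T = ln (det T) + frob_inner S (matrix_inv T)"

lemma det_rank_one_update_pos:
  assumes "finite I" "orthonormal_on I u" "\<And>i. i \<in> I \<Longrightarrow> 0 < \<alpha> i"
  shows "0 < det (rank_one_update I (\<lambda>i. \<alpha> i - 1) u)"
  using assms by (simp add: det_rank_one_update prod_pos)

lemma gauss_KL_cost_rank_one_update:
  assumes "finite I" "orthonormal_on I u" "\<And>i. i \<in> I \<Longrightarrow> 0 < \<alpha> i"
  shows "gauss_KL_cost S (rank_one_update I (\<lambda>i. \<alpha> i - 1) u)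
           = frob_inner S (mat 1) + (\<Sum>i\<in>I. ln (\<alpha> i) + (1 / \<alpha> i - 1) * (u i \<bullet> (S *v u i)))"
proof -
  have "ln (det (rank_one_update I (\<lambda>i. \<alpha> i - 1) u)) = (\<Sum>i\<in>I. ln (\<alpha> i))"
    using assms(3) unfolding det_rank_one_update[OF assms(1,2)]
    by (simp add: ln_prod[OF assms(1)] less_imp_neq[symmetric])
  then show ?thesis
    using assms by (simp add: gauss_KL_cost_def matrix_inv_rank_one_update frob_inner_rank_one_update
        sum.distrib)
qed

lemma gauss_KL_cost_eigenvectors_le:
  fixes S :: "real^'n^'n" and d u :: "nat \<Rightarrow> real^'n"
  assumes pd: "\<And>x. x \<noteq> 0 \<Longrightarrow> 0 < x \<bullet> (S *v x)"
    and eig: "\<And>j. j \<in> {1..N} \<Longrightarrow> S *v d j = lam j *\<^sub>R d j"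
    and d: "orthonormal_on {1..N} d" and N: "N = CARD('n)"
    and ranked: "\<And>i j. i \<in> {1..N} \<Longrightarrow> j \<in> {1..N} \<Longrightarrow> i \<le> j \<Longrightarrow> ell (lam i) \<le> ell (lam j)"
    and \<alpha>: "\<And>i. i \<in> {1..k} \<Longrightarrow> 0 < \<alpha> i" and u: "orthonormal_on {1..k} u"
    and k: "1 \<le> k" "k \<le> N"
  shows "gauss_KL_cost S (rank_one_update {1..k} (\<lambda>i. lam i - 1) d)
           \<le> gauss_KL_cost S (rank_one_update {1..k} (\<lambda>i. \<alpha> i - 1) u)"
proof -
  have dk: "orthonormal_on {1..k} d"
    using d k by (auto intro: orthonormal_on_subset)
  have lam: "0 < lam i" "S *v d i = lam i *\<^sub>R d i" "d i \<bullet> d i = 1" if "i \<in> {1..k}" for i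
    using that k eig orthonormal_on_inner_self[OF dk that]
      eigenvalue_pos[OF pd _ orthonormal_on_nonzero[OF dk that]] by auto
  have cost_d: "gauss_KL_cost S (rank_one_update {1..k} (\<lambda>i. lam i - 1) d)
      = frob_inner S (mat 1) + (\<Sum>i=1..k. ln (lam i) + (1 / lam i - 1) * (d i \<bullet> (S *v d i)))"
    using lam by (intro gauss_KL_cost_rank_one_update[OF _ dk]) auto
  have cost_u: "gauss_KL_cost S (rank_one_update {1..k} (\<lambda>i. \<alpha> i - 1) u)
      = frob_inner S (mat 1) + (\<Sum>i=1..k. ln (\<alpha> i) + (1 / \<alpha> i - 1) * (u i \<bullet> (S *v u i)))"
    using \<alpha> by (intro gauss_KL_cost_rank_one_update[OF _ u]) auto
  have "(\<Sum>i=1..k. ln (lam i) + (1 / lam i - 1) * (d i \<bullet> (S *v d i))) = (\<Sum>i=1..k. ell (lam i))"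
    using lam by (intro sum.cong) (simp_all add: ell_eq)
  also have "\<dots> \<le> (\<Sum>i=1..k. ell (u i \<bullet> (S *v u i)))"
    by (rule sum_ell_eigenvalues_le[OF pd eig d N ranked u k])
  also have "\<dots> \<le> (\<Sum>i=1..k. ln (\<alpha> i) + (1 / \<alpha> i - 1) * (u i \<bullet> (S *v u i)))"
    using \<alpha> u pd orthonormal_on_nonzero[OF u] by (intro sum_mono ell_le) auto
  finally show ?thesis
    unfolding cost_d cost_u by simp
qed

definition second_moment :: "(real^'n) measure \<Rightarrow> (real^'n \<Rightarrow> real) \<Rightarrow> real^'n \<Rightarrow> real^'n^'n" where
  "second_moment M g m = (\<chi> i j. \<integral>x. g x * ((x - m) $ i) * ((x - m) $ j) \<partial>M)"

lemma integrable_centred_product: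
  fixes g :: "real^'n \<Rightarrow> real"
  assumes "integrable M g" "\<And>i. integrable M (\<lambda>x. g x * x $ i)"
    "\<And>i j. integrable M (\<lambda>x. g x * (x $ i) * (x $ j))"
  shows "integrable M (\<lambda>x. g x * ((x - m) $ i) * ((x - m) $ j))"
proof -
  have "(\<lambda>x. g x * ((x - m) $ i) * ((x - m) $ j)) =
      (\<lambda>x. g x * (x $ i) * (x $ j) - m $ j * (g x * x $ i) - m $ i * (g x * x $ j) + (m $ i * m $ j) * g x)"
    by (simp add: fun_eq_iff algebra_simps)
  then show ?thesis
    using assms by simp
qed

lemma integral_quadratic_form:
  fixes g :: "real^'n \<Rightarrow> real"
  assumes "integrable M g" "\<And>i. integrable M (\<lambda>x. g x * x $ i)"
    "\<And>i j. integrable M (\<lambda>x. g x * (x $ i) * (x $ j))"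
  shows "integrable M (\<lambda>x. g x * ((x - m) \<bullet> (A *v (x - m))))"
    and "(\<integral>x. g x * ((x - m) \<bullet> (A *v (x - m))) \<partial>M) = frob_inner (second_moment M g m) A"
proof -
  have eq: "(\<lambda>x. g x * ((x - m) \<bullet> (A *v (x - m))))
      = (\<lambda>x. \<Sum>i\<in>UNIV. \<Sum>j\<in>UNIV. A $ i $ j * (g x * ((x - m) $ i) * ((x - m) $ j)))"
    by (simp add: fun_eq_iff inner_vec_def matrix_vector_mult_def sum_distrib_left mult_ac)
  note int = integrable_mult_right[OF integrable_centred_product[OF assms]]
  show "integrable M (\<lambda>x. g x * ((x - m) \<bullet> (A *v (x - m))))"
    unfolding eq by (intro Bochner_Integration.integrable_sum int)
  have "(\<integral>x. g x * ((x - m) \<bullet> (A *v (x - m))) \<partial>M)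
      = (\<Sum>i\<in>UNIV. \<integral>x. (\<Sum>j\<in>UNIV. A $ i $ j * (g x * ((x - m) $ i) * ((x - m) $ j))) \<partial>M)"
    unfolding eq by (intro Bochner_Integration.integral_sum Bochner_Integration.integrable_sum int)
  also have "\<dots> = (\<Sum>i\<in>UNIV. \<Sum>j\<in>UNIV. \<integral>x. A $ i $ j * (g x * ((x - m) $ i) * ((x - m) $ j)) \<partial>M)"
    by (intro sum.cong refl Bochner_Integration.integral_sum int)
  finally show "(\<integral>x. g x * ((x - m) \<bullet> (A *v (x - m))) \<partial>M) = frob_inner (second_moment M g m) A"
    by (simp add: frob_inner_def second_moment_def mult.commute del: vector_minus_component)
qed

lemma KL_gauss_dens:
  fixes g :: "real^'n \<Rightarrow> real"
  assumes nonneg: "\<And>x. 0 \<le> g x" and g: "integrable lborel g"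
    and mean: "\<And>i. integrable lborel (\<lambda>x. g x * x $ i)"
    and cov: "\<And>i j. integrable lborel (\<lambda>x. g x * (x $ i) * (x $ j))"
    and prob: "(\<integral>x. g x \<partial>lborel) = 1" and det: "0 < det T"
  shows "KL g (gauss_dens m T) =
    (if integrable lborel (\<lambda>x. g x * ln (g x))
     then ereal ((\<integral>x. g x * ln (g x) \<partial>lborel)
                 + (CARD('n) * ln (2 * pi) + gauss_KL_cost (second_moment lborel g m) T) / 2)
     else \<infinity>)"
proof -
  define Q where "Q x = (x - m) \<bullet> (matrix_inv T *v (x - m))" for x
  define K where "K = ln (sqrt ((2 * pi) ^ CARD('n) * det T))"
  define R where "R x = g x * Q x / 2 + K * g x" for x
  have K: "K = (CARD('n) * ln (2 * pi) + ln (det T)) / 2"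
    using det by (simp add: K_def ln_sqrt ln_mult ln_realpow algebra_simps)
  have split: "g x * ln (g x / gauss_dens m T x) = g x * ln (g x) + R x" for x
  proof (cases "g x = 0")
    case False
    then have "0 < g x"
      using nonneg[of x] by simp
    moreover have "0 < gauss_dens m T x"
      using det by (simp add: gauss_dens_def)
    moreover have "ln (gauss_dens m T x) = - Q x / 2 - K"
      using det by (simp add: gauss_dens_def Q_def K_def ln_div)
    ultimately have "ln (g x / gauss_dens m T x) = ln (g x) + Q x / 2 + K"
      by (simp add: ln_div)
    then show ?thesis
      by (simp add: R_def algebra_simps)
  qed (simp add: R_def)
  have R: "integrable lborel R"
    unfolding R_def Q_def using integral_quadratic_form(1)[OF g mean cov] g by simp
  have int_R: "(\<integral>x. R x \<partial>lborel) = frob_inner (second_moment lborel g m) (matrix_inv T) / 2 + K"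
    unfolding R_def Q_def using integral_quadratic_form[OF g mean cov] g prob by simp
  show ?thesis
  proof (cases "integrable lborel (\<lambda>x. g x * ln (g x))")
    case True
    have "(\<integral>x. g x * ln (g x / gauss_dens m T x) \<partial>lborel) = (\<integral>x. g x * ln (g x) \<partial>lborel) + (\<integral>x. R x \<partial>lborel)"
      unfolding split using True R by (rule Bochner_Integration.integral_add)
    moreover have "integrable lborel (\<lambda>x. g x * ln (g x / gauss_dens m T x))"
      unfolding split using True R by (rule Bochner_Integration.integrable_add)
    ultimately show ?thesis
      using True by (simp add: KL_def int_R K gauss_KL_cost_def add_divide_distrib)
  next
    case False
    have "\<not> integrable lborel (\<lambda>x. g x * ln (g x / gauss_dens m T x))"
    proof
      assume "integrable lborel (\<lambda>x. g x * ln (g x / gauss_dens m T x))"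
      then have "integrable lborel (\<lambda>x. g x * ln (g x / gauss_dens m T x) - R x)"
        using R by (rule Bochner_Integration.integrable_diff)
      then show False
        using False by (simp add: split)
    qed
    then show ?thesis
      using False by (simp add: KL_def)
  qed
qed

lemma KL_gauss_dens_rank_one_update_min:
  fixes g :: "real^'n \<Rightarrow> real" and d :: "nat \<Rightarrow> real^'n"
  assumes nonneg: "\<And>x. 0 \<le> g x" and g: "integrable lborel g"
    and mean: "\<And>i. integrable lborel (\<lambda>x. g x * x $ i)"
    and cov: "\<And>i j. integrable lborel (\<lambda>x. g x * (x $ i) * (x $ j))"
    and prob: "(\<integral>x. g x \<partial>lborel) = 1"
    and pd: "\<And>x. x \<noteq> 0 \<Longrightarrow> 0 < x \<bullet> (second_moment lborel g m *v x)"
    and eig: "\<And>j. j \<in> {1..CARD('n)} \<Longrightarrow> second_moment lborel g m *v d j = lam j *\<^sub>R d j"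
    and d: "orthonormal_on {1..CARD('n)} d"
    and ranked: "\<And>i j. i \<in> {1..CARD('n)} \<Longrightarrow> j \<in> {1..CARD('n)} \<Longrightarrow> i \<le> j \<Longrightarrow>
                   ell (lam i) \<le> ell (lam j)"
    and k: "1 \<le> k" "k \<le> CARD('n)" and T: "T \<in> Lnk k"
  shows "KL g (gauss_dens m (rank_one_update {1..k} (\<lambda>i. lam i - 1) d)) \<le> KL g (gauss_dens m T)"
proof -
  obtain \<alpha> u where \<alpha>: "\<forall>i\<in>{1..k}. 0 < \<alpha> i" and u: "orthonormal_on {1..k} u"
    and T_eq: "T = rank_one_update {1..k} (\<lambda>i. \<alpha> i - 1) u"
    using T unfolding Lnk_eq by blast
  have dk: "orthonormal_on {1..k} d"
    using d k by (auto intro: orthonormal_on_subset)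
  have "0 < det (rank_one_update {1..k} (\<lambda>i. lam i - 1) d)"
    using k eigenvalue_pos[OF pd eig orthonormal_on_nonzero[OF d]]
    by (intro det_rank_one_update_pos[OF _ dk]) auto
  moreover have "0 < det T"
    unfolding T_eq using \<alpha> by (intro det_rank_one_update_pos[OF _ u]) auto
  moreover have "gauss_KL_cost (second_moment lborel g m) (rank_one_update {1..k} (\<lambda>i. lam i - 1) d)
                   \<le> gauss_KL_cost (second_moment lborel g m) T"
    unfolding T_eq using \<alpha> by (intro gauss_KL_cost_eigenvectors_le[OF pd eig d refl ranked _ u k]) auto
  ultimately show ?thesis
    by (simp add: KL_gauss_dens[OF nonneg g mean cov prob])
qed

theorem theorem1:
  fixes \<phi> :: "real^'n \<Rightarrow> real"
    and lam :: "nat \<Rightarrow> real" and d :: "nat \<Rightarrow> real^'n"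
    and f gs :: "real^'n \<Rightarrow> real" and E :: real
    and mstar :: "real^'n" and Sstar :: "real^'n^'n"
  defines "f \<equiv> gauss_dens 0 (mat 1)"
    and "E \<equiv> \<integral>x. \<phi> x * f x \<partial>lborel"
    and "gs \<equiv> (\<lambda>x. \<phi> x * f x / E)"
    and "mstar \<equiv> \<integral>x. gs x *\<^sub>R x \<partial>lborel"
    and "Sstar \<equiv> (\<chi> i j. \<integral>x. gs x * ((x - mstar) $ i) * ((x - mstar) $ j) \<partial>lborel)"
  assumes phi_meas: "\<phi> \<in> borel_measurable lborel"
    and phi_nonneg: "\<And>x. \<phi> x \<ge> 0"
    and E_int: "integrable lborel (\<lambda>x. \<phi> x * f x)"
    and E_pos: "E > 0"
    and mean_ex: "\<And>i. integrable lborel (\<lambda>x. gs x * x $ i)"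
    and cov_ex: "\<And>i j. integrable lborel (\<lambda>x. gs x * (x $ i) * (x $ j))"
    and Sstar_pd: "sym_pos_def Sstar"
    and eig: "\<And>i. i \<in> {1..CARD('n)} \<Longrightarrow> Sstar *v d i = lam i *\<^sub>R d i"
    and orthonormal: "\<And>i j. i \<in> {1..CARD('n)} \<Longrightarrow> j \<in> {1..CARD('n)} \<Longrightarrow>
                         d i \<bullet> d j = (if i = j then 1 else 0)"
    and ranked: "\<And>i j. i \<in> {1..CARD('n)} \<Longrightarrow> j \<in> {1..CARD('n)} \<Longrightarrow> i \<le> j \<Longrightarrow>
                    ell (lam i) \<le> ell (lam j)"
    and k: "1 \<le> k" "k \<le> CARD('n)"
  shows "(mat 1 + (\<Sum>i\<in>{1..k}. (lam i - 1) *\<^sub>R outer (d i) (d i))) \<in> Lnk k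
         \<and> (\<forall>S\<in>Lnk k. KL gs (gauss_dens mstar (mat 1 + (\<Sum>i\<in>{1..k}. (lam i - 1) *\<^sub>R outer (d i) (d i))))
                        \<le> KL gs (gauss_dens mstar S))"
proof -
  have C: "mat 1 + (\<Sum>i\<in>{1..k}. (lam i - 1) *\<^sub>R outer (d i) (d i))
             = rank_one_update {1..k} (\<lambda>i. lam i - 1) d"
    by (simp add: rank_one_update_def)
  have Sstar: "Sstar = second_moment lborel gs mstar"
    by (simp add: Sstar_def second_moment_def)
  have pd: "\<And>x. x \<noteq> 0 \<Longrightarrow> 0 < x \<bullet> (Sstar *v x)"
    using Sstar_pd by (simp add: sym_pos_def_def)
  have d: "orthonormal_on {1..CARD('n)} d"
    using orthonormal by (simp add: orthonormal_on_def)
  have "0 \<le> f x" for x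
    by (simp add: f_def gauss_dens_def)
  then have gs: "\<And>x. 0 \<le> gs x" "integrable lborel gs" "(\<integral>x. gs x \<partial>lborel) = 1"
    using phi_nonneg E_pos E_int by (simp_all add: gs_def E_def[symmetric])
  have "\<forall>i\<in>{1..k}. 0 < lam i"
    using k eigenvalue_pos[OF pd eig orthonormal_on_nonzero[OF d]] by auto
  moreover have "orthonormal_on {1..k} d"
    using d k by (auto intro: orthonormal_on_subset)
  ultimately have "rank_one_update {1..k} (\<lambda>i. lam i - 1) d \<in> Lnk k"
    unfolding Lnk_eq by blast
  moreover have "KL gs (gauss_dens mstar (rank_one_update {1..k} (\<lambda>i. lam i - 1) d))
                   \<le> KL gs (gauss_dens mstar S)" if "S \<in> Lnk k" for S
    by (rule KL_gauss_dens_rank_one_update_min[OF gs(1,2) mean_ex cov_ex gs(3)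
          pd[unfolded Sstar] eig[unfolded Sstar] d ranked k that])
  ultimately show ?thesis
    unfolding C by blast
qed

end
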